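(* Let $R$ be a commutative ring, $I$ an ideal of $R$ and $n\ge 3$. Let $\varepsilon=\varepsilon_1\cdots\varepsilon_r\in\mathrm{EO}^1_{2n}(R,I)$ where each $\varepsilon_k$ is one of the generators $oe_{1i}(a)$ ($a\in R$, $3\le i\le 2n$) or $oe_{j1}(x)$ ($x\in I$, $3\le j\le 2n$). Let $oe_{ij}(Xf(X))$ be a generator of $\mathrm{EO}^1_{2n}(R[X],I[X])$, i.e. either $i=1$, $3\le j\le 2n$ and $f(X)\in R[X]$, or $j=1$, $3\le i\le 2n$ and $f(X)\in I[X]$. Then in $\mathrm{EO}_{2n}(R[X,Y])$ $$\varepsilon\, oe_{ij}\big(Y^{4^r}Xf(Y^{4^r}X)\big)\,\varepsilon^{-1}=\prod_{t=1}^s oe_{i_tj_t}\big(Yh_t(X,Y)\big)$$ for some $s$, where for each $t$ either $i_t=1$ and $h_t(X,Y)\in R[X,Y]$, or $j_t=1$ and $h_t(X,Y)\in I[X,Y]$.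
   Context: Let $\sigma$ be the permutation of $\{1,\dots,2n\}$ with $\sigma(2i)=2i-1$, $\sigma(2i-1)=2i$. For a commutative ring $A$, $z\in A$ and $1\le i\ne j\le 2n$ with $i\ne\sigma(j)$, $oe_{ij}(z)=1_{2n}+z e_{ij}-z e_{\sigma(j)\sigma(i)}$ (these are orthogonal with respect to $\widetilde\psi_n=\sum_{i=1}^n(e_{2i-1,2i}+e_{2i,2i-1})$), and $\mathrm{EO}_{2n}(A)$ is the group they generate. For an ideal $J$ of $A$, $\mathrm{EO}^1_{2n}(A,J)$ is the subgroup of $\mathrm{EO}_{2n}(A)$ generated by $oe_{1i}(a)$, $oe_{j1}(x)$ with $a\in A$, $x\in J$, $3\le i,j\le 2n$. $I[X]=IR[X]$, $I[X,Y]=IR[X,Y]$. *)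

theory Defs
  imports "Jordan_Normal_Form.Matrix" "HOL-Computational_Algebra.Polynomial"
begin

(* Matrices of size 2n are Jordan_Normal_Form matrices; the paper's 1-based
   index i (1 \<le> i \<le> 2n) corresponds to the 0-based index i - 1. *)

definition sigma :: "nat \<Rightarrow> nat" where
  "sigma k = (if even k then k - 1 else k + 1)"

definition eunit :: "nat \<Rightarrow> nat \<Rightarrow> nat \<Rightarrow> 'a::comm_ring_1 mat" where
  "eunit n i j = mat (2*n) (2*n) (\<lambda>(a,b). if a + 1 = i \<and> b + 1 = j then 1 else 0)"

definition oe :: "nat \<Rightarrow> nat \<Rightarrow> nat \<Rightarrow> 'a::comm_ring_1 \<Rightarrow> 'a mat" where
  "oe n i j z = 1\<^sub>m (2*n) + z \<cdot>\<^sub>m eunit n i j - z \<cdot>\<^sub>m eunit n (sigma j) (sigma i)"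

definition oe_idx :: "nat \<Rightarrow> nat \<Rightarrow> nat \<Rightarrow> bool" where
  "oe_idx n i j \<longleftrightarrow> 1 \<le> i \<and> i \<le> 2*n \<and> 1 \<le> j \<and> j \<le> 2*n \<and> i \<noteq> j \<and> i \<noteq> sigma j"

definition mat_list_prod :: "nat \<Rightarrow> 'a::comm_ring_1 mat list \<Rightarrow> 'a mat" where
  "mat_list_prod n Ms = foldr (\<lambda>A B. A * B) Ms (1\<^sub>m (2*n))"

definition is_ideal :: "'a::comm_ring_1 set \<Rightarrow> bool" where
  "is_ideal I \<longleftrightarrow> 0 \<in> I \<and> (\<forall>x\<in>I. \<forall>y\<in>I. x + y \<in> I) \<and> (\<forall>a x. x \<in> I \<longrightarrow> a * x \<in> I)"

definition EO1_gen :: "nat \<Rightarrow> 'a::comm_ring_1 set \<Rightarrow> nat \<times> nat \<times> 'a \<Rightarrow> bool" where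
  "EO1_gen n J g = (case g of (i, j, z) \<Rightarrow>
      (i = 1 \<and> 3 \<le> j \<and> j \<le> 2*n) \<or> (j = 1 \<and> 3 \<le> i \<and> i \<le> 2*n \<and> z \<in> J))"

(* R[X,Y] is rendered as ('a poly) poly: inner variable X, outer variable Y *)
definition varX :: "'a::comm_ring_1 poly poly" where "varX = [:[:0, 1:]:]"
definition varY :: "'a::comm_ring_1 poly poly" where "varY = [:0, 1:]"
definition constXY :: "'a::comm_ring_1 \<Rightarrow> 'a poly poly" where "constXY c = [:[:c:]:]"

definition poly_ideal1 :: "'a::comm_ring_1 set \<Rightarrow> 'a poly set" where
  "poly_ideal1 I = {f. \<forall>k. coeff f k \<in> I}"

definition poly_ideal2 :: "'a::comm_ring_1 set \<Rightarrow> 'a poly poly set" where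
  "poly_ideal2 I = {h. \<forall>k l. coeff (coeff h k) l \<in> I}"

definition subst_XY :: "'a::comm_ring_1 poly \<Rightarrow> 'a poly poly \<Rightarrow> 'a poly poly" where
  "subst_XY f t = poly (map_poly constXY f) t"

end

theory Submission
  imports Defs
begin

text \<open>
  Write \<open>T\<close> for a power of \<open>Y\<close> and call a product of generators \<open>oe\<^sub>1\<^sub>j(T h)\<close> with
  \<open>h \<in> R[X,Y]\<close> and \<open>oe\<^sub>i\<^sub>1(T h)\<close> with \<open>h \<in> I[X,Y]\<close> a \<open>T\<close>-word. The key step is that
  conjugating a \<open>T\<^sup>4\<close>-word by one generator of \<open>EO\<^sup>1(R, I)\<close> gives a \<open>T\<close>-word; iterating over
  the \<open>r\<close> factors of \<open>\<epsilon>\<close> then turns \<open>oe\<^sub>i\<^sub>j(Y\<^bsup>4^r\<^esup> X f(Y\<^bsup>4^r\<^esup> X))\<close> into a \<open>Y\<close>-word.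

  For a single generator the conjugate is computed with the Chevalley commutator formulas: either
  the two generators commute, or one extra factor \<open>oe\<^sub>p\<^sub>k(T\<^sup>2 c)\<close> with \<open>p, k \<ge> 3\<close> appears,
  which is the commutator of the \<open>T\<close>-words \<open>oe\<^sub>p\<^sub>1(T c)\<close> and \<open>oe\<^sub>1\<^sub>k(T)\<close>. The two remaining
  cases, \<open>oe\<^sub>1\<^sub>k(a)\<close> acting on \<open>oe\<^sub>k\<^sub>1(T\<^sup>4 h)\<close> and its transpose, are reduced to the others by
  writing \<open>oe\<^sub>k\<^sub>1(T\<^sup>4 h) = [oe\<^sub>k\<^sub>l(T\<^sup>2), oe\<^sub>l\<^sub>1(T\<^sup>2 h)]\<close> for a third index
  \<open>l \<notin> {1, 2, k, \<sigma> k}\<close>, which exists because \<open>n \<ge> 3\<close>, and by the observation that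
  conjugation by any \<open>oe\<^sub>k\<^sub>l(u)\<close> with \<open>k, l \<ge> 3\<close> maps \<open>T\<close>-words to \<open>T\<close>-words.
\<close>

definition is_index :: "nat \<Rightarrow> nat \<Rightarrow> bool" where
  "is_index n a \<longleftrightarrow> 1 \<le> a \<and> a \<le> 2*n"

lemma sigma_sigma: "1 \<le> k \<Longrightarrow> sigma (sigma k) = k"
  unfolding sigma_def by auto

lemma sigma_ne: "1 \<le> k \<Longrightarrow> sigma k \<noteq> k"
  unfolding sigma_def by auto

lemma sigma_eq_iff: "1 \<le> k \<Longrightarrow> 1 \<le> l \<Longrightarrow> sigma k = l \<longleftrightarrow> k = sigma l"
  by (metis sigma_sigma)

lemma sigma_inj_iff: "1 \<le> a \<Longrightarrow> 1 \<le> b \<Longrightarrow> sigma a = sigma b \<longleftrightarrow> a = b"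
  by (metis sigma_sigma)

lemma sigma_Suc_0 [simp]: "sigma (Suc 0) = 2"
  unfolding sigma_def by auto

lemma sigma_ge_3: "3 \<le> k \<Longrightarrow> 3 \<le> sigma k"
  unfolding sigma_def by auto presburger

lemma is_index_sigma: "is_index n k \<Longrightarrow> is_index n (sigma k)"
  unfolding is_index_def sigma_def by auto presburger

lemma sigma_le: "1 \<le> k \<Longrightarrow> k \<le> 2*n \<Longrightarrow> sigma k \<le> 2*n"
  using is_index_sigma[of n k] unfolding is_index_def by auto

lemma oe_idxD:
  assumes "oe_idx n i j"
  shows "is_index n i" "is_index n j" "is_index n (sigma i)" "is_index n (sigma j)"
    "sigma (sigma i) = i" "sigma (sigma j) = j"
    "i \<noteq> j" "i \<noteq> sigma j" "sigma i \<noteq> j" "sigma i \<noteq> sigma j"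
    "j \<noteq> i" "sigma j \<noteq> i" "j \<noteq> sigma i" "sigma j \<noteq> sigma i"
    "sigma i \<noteq> i" "sigma j \<noteq> j" "i \<noteq> sigma i" "j \<noteq> sigma j"
proof -
  have i: "1 \<le> i" "i \<le> 2*n" and j: "1 \<le> j" "j \<le> 2*n" and ij: "i \<noteq> j" "i \<noteq> sigma j"
    using assms unfolding oe_idx_def by auto
  then show "is_index n i" "is_index n j" "is_index n (sigma i)" "is_index n (sigma j)"
    using is_index_sigma unfolding is_index_def by blast+
  show "sigma (sigma i) = i" "sigma (sigma j) = j" using i j sigma_sigma by blast+
  show "sigma i \<noteq> i" "sigma j \<noteq> j" "i \<noteq> sigma i" "j \<noteq> sigma j"
    using sigma_ne[OF i(1)] sigma_ne[OF j(1)] by auto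
  show "i \<noteq> j" "i \<noteq> sigma j" "sigma i \<noteq> j" "sigma i \<noteq> sigma j"
    "j \<noteq> i" "sigma j \<noteq> i" "j \<noteq> sigma i" "sigma j \<noteq> sigma i"
    using i j ij sigma_eq_iff[of i j] sigma_inj_iff[of i j] by auto
qed

lemma oe_idx_sigma: "oe_idx n i j \<Longrightarrow> oe_idx n (sigma j) (sigma i)"
  using oe_idxD[of n i j] unfolding oe_idx_def is_index_def by auto

lemma oe_idx_row: "3 \<le> q \<Longrightarrow> q \<le> 2*n \<Longrightarrow> oe_idx n 1 q"
  unfolding oe_idx_def using sigma_ge_3[of q] by auto

lemma oe_idx_col: "3 \<le> p \<Longrightarrow> p \<le> 2*n \<Longrightarrow> oe_idx n p 1"
  unfolding oe_idx_def sigma_def by auto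

lemma oe_idx_inner:
  "3 \<le> k \<Longrightarrow> k \<le> 2*n \<Longrightarrow> 3 \<le> l \<Longrightarrow> l \<le> 2*n \<Longrightarrow> k \<noteq> l \<Longrightarrow> k \<noteq> sigma l \<Longrightarrow>
    oe_idx n k l"
  unfolding oe_idx_def by auto

lemma exists_index_apart:
  assumes "3 \<le> n" "3 \<le> k" "k \<le> 2*n"
  obtains l where "3 \<le> l" "l \<le> 2*n" "oe_idx n k l" "oe_idx n l k"
proof -
  obtain l where l: "3 \<le> l" "l \<le> 2*n" "l \<noteq> k" "l \<noteq> sigma k"
  proof (cases "k \<le> 4")
    case True
    then have "k = 3 \<or> k = 4" using assms(2) by auto
    then have "sigma k \<le> 4" by (auto simp: sigma_def)
    with True assms that[of 5] show ?thesis by auto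
  next
    case False
    then have "sigma k \<ge> 4" by (auto simp: sigma_def)
    with False assms that[of 3] show ?thesis by auto
  qed
  moreover have "k \<noteq> sigma l" using l assms(2) sigma_eq_iff[of k l] by auto
  ultimately show ?thesis
    using assms that oe_idx_inner[of k n l] oe_idx_inner[of l n k] by auto
qed

section \<open>Entries and relations between generators\<close>

text \<open>
  Each
  proof is a case split on the coincidences among the indices involved, so the hypotheses are
  chosen to decide all of them: a single lemma covering several coincidence patterns makes the
  simplifier's case split explode.
\<close>

definition ent :: "'a mat \<Rightarrow> nat \<Rightarrow> nat \<Rightarrow> 'a" where
  "ent M a b = M $$ (a - 1, b - 1)"

lemma oe_carrier [simp]: "oe n i j z \<in> carrier_mat (2*n) (2*n)"
  unfolding oe_def eunit_def by auto

lemma ent_one: "is_index n a \<Longrightarrow> is_index n b \<Longrightarrow> ent (1\<^sub>m (2*n)) a b = (if a = b then 1 else 0)"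
  unfolding ent_def is_index_def by auto

lemma ent_oe:
  assumes "is_index n a" "is_index n b"
  shows "ent (oe n i j z) a b = (if a = b then 1 else 0) + (if a = i \<and> b = j then z else 0)
    - (if a = sigma j \<and> b = sigma i then z else 0)"
proof -
  have "a - 1 < 2*n" "b - 1 < 2*n" "a - 1 + 1 = a" "b - 1 + 1 = b"
    using assms unfolding is_index_def by auto
  then show ?thesis
    unfolding ent_def oe_def eunit_def
    by (simp add: if_distrib[where f="\<lambda>x. z * x"] del: Suc_eq_plus1 cong: if_cong)
qed

lemma ent_eunit_mult:
  assumes M: "M \<in> carrier_mat (2*n) (2*n)" and "is_index n a" "is_index n b" "is_index n j"
  shows "ent (eunit n i j * M) a b = (if a = i then ent M j b else 0)"
proof -
  have a: "a - 1 < 2*n" "a - 1 + 1 = a" and b: "b - 1 < 2*n" and j: "j - 1 < 2*n" "j - 1 + 1 = j"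
    using assms unfolding is_index_def by auto
  have "ent (eunit n i j * M) a b = (\<Sum>k<2*n. eunit n i j $$ (a - 1, k) * M $$ (k, b - 1))"
    using M a b by (simp add: ent_def scalar_prod_def eunit_def atLeast0LessThan)
  also have "\<dots> = (\<Sum>k<2*n. if k = j - 1 then (if a = i then M $$ (k, b - 1) else 0) else 0)"
    using a j by (intro sum.cong) (auto simp: eunit_def)
  also have "\<dots> = (if a = i then ent M j b else 0)"
    using j by (auto simp: ent_def)
  finally show ?thesis .
qed

lemma ent_oe_mult:
  fixes z :: "'a::comm_ring_1"
  assumes M: "M \<in> carrier_mat (2*n) (2*n)" and a: "is_index n a" and b: "is_index n b"
    and ij: "oe_idx n i j"
  shows "ent (oe n i j z * M) a b = ent M a b + (if a = i then z * ent M j b else 0)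
     - (if a = sigma j then z * ent M (sigma i) b else 0)"
proof -
  let ?A = "eunit n i j :: 'a mat" and ?B = "eunit n (sigma j) (sigma i) :: 'a mat"
  have AB: "?A \<in> carrier_mat (2*n) (2*n)" "?B \<in> carrier_mat (2*n) (2*n)"
    by (simp_all add: eunit_def)
  have "oe n i j z * M = M + z \<cdot>\<^sub>m (?A * M) - z \<cdot>\<^sub>m (?B * M)"
    using M AB unfolding oe_def
    by (simp add: minus_mult_distrib_mat[of _ "2*n" "2*n"] add_mult_distrib_mat[of _ "2*n" "2*n"]
        mult_smult_assoc_mat[of _ "2*n" "2*n" M "2*n"])
  moreover have "a - 1 < 2*n" "b - 1 < 2*n"
    using a b unfolding is_index_def by auto
  ultimately show ?thesis
    using M AB ent_eunit_mult[OF M a b, of j i] ent_eunit_mult[OF M a b, of "sigma i" "sigma j"]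
      oe_idxD[OF ij] by (simp add: ent_def)
qed

lemma mat_eq_entI:
  assumes "A \<in> carrier_mat (2*n) (2*n)" "B \<in> carrier_mat (2*n) (2*n)"
    and "\<And>a b. is_index n a \<Longrightarrow> is_index n b \<Longrightarrow> ent A a b = ent B a b"
  shows "A = B"
proof (rule eq_matI)
  fix x y assume "x < dim_row B" "y < dim_col B"
  then show "A $$ (x, y) = B $$ (x, y)"
    using assms assms(3)[of "x + 1" "y + 1"] by (simp add: ent_def is_index_def)
qed (use assms in auto)

lemma oe_mult_assoc:
  "B \<in> carrier_mat (2*n) (2*n) \<Longrightarrow> C \<in> carrier_mat (2*n) (2*n) \<Longrightarrow>
    oe n i j s * B * C = oe n i j s * (B * C)"
  by (rule assoc_mult_mat[OF oe_carrier]) auto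

lemma oe_mult_carrier [simp]:
  "M \<in> carrier_mat (2*n) (2*n) \<Longrightarrow> oe n i j s * M \<in> carrier_mat (2*n) (2*n)"
  by (rule mult_carrier_mat[OF oe_carrier])

lemma oe_mult_inverse:
  assumes "oe_idx n i j"
  shows "oe n i j s * oe n i j (- s) = 1\<^sub>m (2*n)"
  using oe_idxD[OF assms]
  by (intro mat_eq_entI[of _ n]) (simp_all add: ent_oe_mult ent_oe ent_one assms)

lemma oe_add:
  assumes "oe_idx n i j"
  shows "oe n i j s * oe n i j t = oe n i j (s + t)"
  using oe_idxD[OF assms]
  by (intro mat_eq_entI[of _ n]) (simp_all add: ent_oe_mult ent_oe assms)

lemma oe_sigma_transpose:
  assumes "oe_idx n i j"
  shows "oe n (sigma j) (sigma i) z = oe n i j (- z)"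
  using oe_idxD[OF assms]
  by (intro mat_eq_entI[of _ n]) (auto simp: ent_oe)

lemma oe_commute_disjoint:
  assumes "oe_idx n i j" "oe_idx n k l"
    and "{i, j, sigma i, sigma j} \<inter> {k, l, sigma k, sigma l} = {}"
  shows "oe n i j s * oe n k l t = oe n k l t * oe n i j s"
proof -
  have "i \<noteq> k" "i \<noteq> l" "i \<noteq> sigma k" "i \<noteq> sigma l" "j \<noteq> k" "j \<noteq> l" "j \<noteq> sigma k"
    "j \<noteq> sigma l" "sigma i \<noteq> k" "sigma i \<noteq> l" "sigma i \<noteq> sigma k" "sigma i \<noteq> sigma l"
    "sigma j \<noteq> k" "sigma j \<noteq> l" "sigma j \<noteq> sigma k" "sigma j \<noteq> sigma l"
    "k \<noteq> i" "l \<noteq> i" "sigma k \<noteq> i" "sigma l \<noteq> i" "k \<noteq> j" "l \<noteq> j" "sigma k \<noteq> j"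
    "sigma l \<noteq> j" "k \<noteq> sigma i" "l \<noteq> sigma i" "sigma k \<noteq> sigma i" "sigma l \<noteq> sigma i"
    "k \<noteq> sigma j" "l \<noteq> sigma j" "sigma k \<noteq> sigma j" "sigma l \<noteq> sigma j"
    using assms(3) by auto
  with oe_idxD[OF assms(1)] oe_idxD[OF assms(2)] show ?thesis
    by (intro mat_eq_entI[of _ n]) (simp_all add: ent_oe_mult ent_oe assms)
qed

lemma oe_commute_row_sigma:
  assumes ij: "oe_idx n i j" and ik: "oe_idx n i (sigma j)"
  shows "oe n i j s * oe n i (sigma j) t = oe n i (sigma j) t * oe n i j s"
  using oe_idxD[OF ij] oe_idxD[OF ik]
  by (intro mat_eq_entI[of _ n]) (simp_all add: ent_oe_mult ent_oe ij ik)

lemma oe_commute_same_row: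
  assumes ij: "oe_idx n i j" and ik: "oe_idx n i k"
  shows "oe n i j s * oe n i k t = oe n i k t * oe n i j s"
proof -
  consider "k = j" | "k = sigma j"
    | "k \<noteq> j" "j \<noteq> k" "k \<noteq> sigma j" "sigma j \<noteq> k" "j \<noteq> sigma k" "sigma k \<noteq> j"
      "sigma k \<noteq> sigma j" "sigma j \<noteq> sigma k"
    using oe_idxD[OF ij] oe_idxD[OF ik] by metis
  then show ?thesis
  proof cases
    case 1
    then show ?thesis by (simp add: oe_add[OF ij] add.commute)
  next
    case 2
    then show ?thesis using oe_commute_row_sigma[OF ij] ik by simp
  next
    case 3
    with oe_idxD[OF ij] oe_idxD[OF ik] show ?thesis
      by (intro mat_eq_entI[of _ n]) (simp_all add: ent_oe_mult ent_oe ij ik)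
  qed
qed

lemma oe_commute_col_sigma:
  assumes ik: "oe_idx n i k" and jk: "oe_idx n (sigma i) k"
  shows "oe n i k s * oe n (sigma i) k t = oe n (sigma i) k t * oe n i k s"
  using oe_idxD[OF ik] oe_idxD[OF jk]
  by (intro mat_eq_entI[of _ n]) (simp_all add: ent_oe_mult ent_oe ik jk)

lemma oe_commute_same_col:
  assumes ik: "oe_idx n i k" and jk: "oe_idx n j k"
  shows "oe n i k s * oe n j k t = oe n j k t * oe n i k s"
proof -
  consider "j = i" | "j = sigma i"
    | "j \<noteq> i" "i \<noteq> j" "j \<noteq> sigma i" "sigma i \<noteq> j" "i \<noteq> sigma j" "sigma j \<noteq> i"
      "sigma j \<noteq> sigma i" "sigma i \<noteq> sigma j"
    using oe_idxD[OF ik] oe_idxD[OF jk] by metis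
  then show ?thesis
  proof cases
    case 1
    then show ?thesis by (simp add: oe_add[OF ik] add.commute)
  next
    case 2
    then show ?thesis using oe_commute_col_sigma[OF ik] jk by simp
  next
    case 3
    with oe_idxD[OF ik] oe_idxD[OF jk] show ?thesis
      by (intro mat_eq_entI[of _ n]) (simp_all add: ent_oe_mult ent_oe ik jk)
  qed
qed

lemma oe_commute_sigma:
  assumes "oe_idx n i k" "oe_idx n (sigma k) i"
  shows "oe n i k s * oe n (sigma k) i t = oe n (sigma k) i t * oe n i k s"
  using oe_idxD[OF assms(1)] oe_idxD[OF assms(2)]
  by (intro mat_eq_entI[of _ n]) (simp_all add: ent_oe_mult ent_oe assms)

lemma oe_conj_adjacent:
  assumes "oe_idx n i j" "oe_idx n j m" "oe_idx n i m"
  shows "oe n i j s * oe n j m t * oe n i j (- s) = oe n j m t * oe n i m (s * t)"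
  using oe_idxD[OF assms(1)] oe_idxD[OF assms(2)] oe_idxD[OF assms(3)]
  by (simp add: oe_mult_assoc, intro mat_eq_entI[of _ n]) (simp_all add: ent_oe_mult ent_oe assms)

lemma oe_conj_adjacent':
  assumes "oe_idx n i j" "oe_idx n j m" "oe_idx n i m"
  shows "oe n j m t * oe n i j s * oe n j m (- t) = oe n i j s * oe n i m (- (s * t))"
  using oe_idxD[OF assms(1)] oe_idxD[OF assms(2)] oe_idxD[OF assms(3)]
  by (simp add: oe_mult_assoc, intro mat_eq_entI[of _ n]) (simp_all add: ent_oe_mult ent_oe assms)

lemma oe_commutator:
  assumes "oe_idx n i j" "oe_idx n j m" "oe_idx n i m"
  shows "oe n i j s * oe n j m t * oe n i j (- s) * oe n j m (- t) = oe n i m (s * t)"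
  using oe_idxD[OF assms(1)] oe_idxD[OF assms(2)] oe_idxD[OF assms(3)]
  by (simp add: oe_mult_assoc, intro mat_eq_entI[of _ n]) (simp_all add: ent_oe_mult ent_oe assms)

lemma oe_cancel:
  "oe_idx n i j \<Longrightarrow> M \<in> carrier_mat (2*n) (2*n) \<Longrightarrow> oe n i j (- s) * (oe n i j s * M) = M"
  using oe_mult_inverse[of n i j "- s"] oe_mult_assoc[of "oe n i j s" n M i j "- s"] by simp

lemma oe_conj_commuting:
  assumes "oe_idx n i j" "M \<in> carrier_mat (2*n) (2*n)" "oe n i j s * M = M * oe n i j s"
  shows "oe n i j s * M * oe n i j (- s) = M"
  using assms oe_mult_inverse[OF assms(1), of s]
  by (metis assoc_mult_mat oe_carrier right_mult_one_mat)

lemma mat_list_prod_Nil [simp]: "mat_list_prod n [] = 1\<^sub>m (2*n)"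
  unfolding mat_list_prod_def by simp

lemma mat_list_prod_Cons [simp]: "mat_list_prod n (A # As) = A * mat_list_prod n As"
  unfolding mat_list_prod_def by simp

lemma mat_list_prod_carrier:
  "set As \<subseteq> carrier_mat (2*n) (2*n) \<Longrightarrow> mat_list_prod n As \<in> carrier_mat (2*n) (2*n)"
  by (induction As) auto

lemma mat_list_prod_append:
  assumes "set (As @ Bs) \<subseteq> carrier_mat (2*n) (2*n)"
  shows "mat_list_prod n (As @ Bs) = mat_list_prod n As * mat_list_prod n Bs"
  using assms
proof (induction As)
  case Nil
  then show ?case using mat_list_prod_carrier[of Bs n] by simp
next
  case (Cons A As)
  then show ?case using mat_list_prod_carrier[of As n] mat_list_prod_carrier[of Bs n]
    by (simp add: assoc_mult_mat[of A "2*n" "2*n" _ "2*n" _ "2*n"])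
qed

lemma is_ideal_sum:
  assumes "is_ideal I" "\<And>x. x \<in> A \<Longrightarrow> f x \<in> I"
  shows "sum f A \<in> I"
proof (cases "finite A")
  case True
  then show ?thesis using assms(2)
    by (induction A rule: finite_induct) (use assms(1) in \<open>auto simp: is_ideal_def\<close>)
qed (use assms in \<open>auto simp: is_ideal_def\<close>)

lemma poly_ideal1_mult: "is_ideal I \<Longrightarrow> q \<in> poly_ideal1 I \<Longrightarrow> p * q \<in> poly_ideal1 I"
  by (auto simp: poly_ideal1_def coeff_mult is_ideal_def intro!: is_ideal_sum)

lemma poly_ideal1_sum:
  "is_ideal I \<Longrightarrow> (\<And>x. x \<in> A \<Longrightarrow> f x \<in> poly_ideal1 I) \<Longrightarrow> sum f A \<in> poly_ideal1 I"
  by (auto simp: poly_ideal1_def coeff_sum intro!: is_ideal_sum)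

lemma poly_ideal2_iff: "h \<in> poly_ideal2 I \<longleftrightarrow> (\<forall>k. coeff h k \<in> poly_ideal1 I)"
  unfolding poly_ideal1_def poly_ideal2_def by auto

lemma poly_ideal2_mult: "is_ideal I \<Longrightarrow> h \<in> poly_ideal2 I \<Longrightarrow> g * h \<in> poly_ideal2 I"
  unfolding poly_ideal2_iff by (auto simp: coeff_mult intro!: poly_ideal1_sum poly_ideal1_mult)

lemma poly_ideal2_mult_right: "is_ideal I \<Longrightarrow> h \<in> poly_ideal2 I \<Longrightarrow> h * g \<in> poly_ideal2 I"
  using poly_ideal2_mult[of I h g] by (simp add: mult.commute)

lemma poly_ideal2_uminus: "is_ideal I \<Longrightarrow> h \<in> poly_ideal2 I \<Longrightarrow> - h \<in> poly_ideal2 I"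
  using poly_ideal2_mult[of I h "- 1"] by simp

lemma poly_ideal2_sum:
  "is_ideal I \<Longrightarrow> (\<And>x. x \<in> A \<Longrightarrow> f x \<in> poly_ideal2 I) \<Longrightarrow> sum f A \<in> poly_ideal2 I"
  unfolding poly_ideal2_iff by (auto simp: coeff_sum intro!: poly_ideal1_sum)

lemma constXY_in_poly_ideal2: "is_ideal I \<Longrightarrow> x \<in> I \<Longrightarrow> constXY x \<in> poly_ideal2 I"
  unfolding poly_ideal2_def constXY_def is_ideal_def by (auto simp: coeff_pCons split: nat.splits)

lemma subst_XY_in_poly_ideal2:
  assumes I: "is_ideal I" and f: "f \<in> poly_ideal1 I"
  shows "subst_XY f t \<in> poly_ideal2 I"
proof -
  have "constXY (coeff f k) \<in> poly_ideal2 I" for k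
    using f by (intro constXY_in_poly_ideal2[OF I]) (auto simp: poly_ideal1_def)
  moreover have "constXY 0 = 0" by (simp add: constXY_def)
  ultimately show ?thesis
    unfolding subst_XY_def poly_altdef
    by (intro poly_ideal2_sum[OF I] poly_ideal2_mult_right[OF I]) (subst coeff_map_poly)
qed

section \<open>Words in the generators of the relative group\<close>

definition EO1_poly_gen :: "nat \<Rightarrow> 'a::comm_ring_1 set \<Rightarrow> nat \<times> nat \<times> 'a poly poly \<Rightarrow> bool" where
  "EO1_poly_gen n I g \<longleftrightarrow> (case g of (i, j, h) \<Rightarrow> oe_idx n i j \<and> (i = 1 \<or> j = 1 \<and> h \<in> poly_ideal2 I))"

lemma EO1_poly_genE:
  assumes "EO1_poly_gen n I (i, j, h)"
  obtains "i = 1" "3 \<le> j" "j \<le> 2*n" | "j = 1" "3 \<le> i" "i \<le> 2*n" "h \<in> poly_ideal2 I"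
proof -
  have ij: "1 \<le> i" "i \<le> 2*n" "1 \<le> j" "j \<le> 2*n" "i \<noteq> j" "i \<noteq> sigma j"
    and h: "i = 1 \<or> j = 1 \<and> h \<in> poly_ideal2 I"
    using assms unfolding EO1_poly_gen_def oe_idx_def by auto
  from h show ?thesis
  proof
    assume "i = 1"
    moreover have "sigma 2 = 1" by (simp add: sigma_def)
    ultimately have "j \<noteq> 1" "j \<noteq> 2" using ij by auto
    with \<open>i = 1\<close> ij that(1) show ?thesis by simp
  next
    assume "j = 1 \<and> h \<in> poly_ideal2 I"
    with ij that(2) show ?thesis by simp
  qed
qed

definition EO1_word :: "nat \<Rightarrow> 'a::comm_ring_1 set \<Rightarrow> 'a poly poly \<Rightarrow> 'a poly poly mat \<Rightarrow> bool" where
  "EO1_word n I T M \<longleftrightarrow> (\<exists>hs. (\<forall>g \<in> set hs. EO1_poly_gen n I g) \<and>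
     M = mat_list_prod n (map (\<lambda>(i, j, h). oe n i j (T * h)) hs))"

lemma EO1_word_carrier: "EO1_word n I T M \<Longrightarrow> M \<in> carrier_mat (2*n) (2*n)"
  unfolding EO1_word_def by (auto intro!: mat_list_prod_carrier)

lemma EO1_word_one: "EO1_word n I T (1\<^sub>m (2*n))"
  unfolding EO1_word_def by (intro exI[of _ "[]"]) simp

lemma EO1_word_mult:
  assumes "EO1_word n I T A" "EO1_word n I T B"
  shows "EO1_word n I T (A * B)"
proof -
  obtain as bs where "\<forall>g \<in> set as. EO1_poly_gen n I g" "\<forall>g \<in> set bs. EO1_poly_gen n I g"
    and "A = mat_list_prod n (map (\<lambda>(i, j, h). oe n i j (T * h)) as)"
    and "B = mat_list_prod n (map (\<lambda>(i, j, h). oe n i j (T * h)) bs)"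
    using assms unfolding EO1_word_def by blast
  then show ?thesis
    unfolding EO1_word_def by (intro exI[of _ "as @ bs"])
      (auto intro!: mat_list_prod_append[symmetric])
qed

lemma EO1_word_gen: "EO1_poly_gen n I (i, j, h) \<Longrightarrow> EO1_word n I T (oe n i j (T * h))"
  unfolding EO1_word_def
  by (intro exI[of _ "[(i, j, h)]"]) (auto simp: right_mult_one_mat[OF oe_carrier])

lemma EO1_word_row: "3 \<le> q \<Longrightarrow> q \<le> 2*n \<Longrightarrow> T dvd z \<Longrightarrow> EO1_word n I T (oe n 1 q z)"
  using EO1_word_gen[of n I 1 q _ T] oe_idx_row[of q n] by (auto simp: EO1_poly_gen_def)

lemma EO1_word_col:
  "3 \<le> p \<Longrightarrow> p \<le> 2*n \<Longrightarrow> h \<in> poly_ideal2 I \<Longrightarrow> EO1_word n I T (oe n p 1 (T * h))"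
  using EO1_word_gen[of n I p 1 h T] oe_idx_col[of p n] by (simp add: EO1_poly_gen_def)

lemma EO1_word_inner:
  assumes I: "is_ideal I" and pk: "3 \<le> p" "p \<le> 2*n" "3 \<le> k" "k \<le> 2*n" "oe_idx n p k"
    and c: "c \<in> poly_ideal2 I"
  shows "EO1_word n I T (oe n p k (T * T * c))"
proof -
  have "EO1_word n I T (oe n p 1 (T * c) * oe n 1 k T * oe n p 1 (T * - c) * oe n 1 k (- T))"
    using pk c poly_ideal2_uminus[OF I c] by (intro EO1_word_mult EO1_word_row EO1_word_col) auto
  also have "oe n p 1 (T * c) * oe n 1 k T * oe n p 1 (T * - c) * oe n 1 k (- T)
      = oe n p k (T * T * c)"
    using oe_commutator[OF oe_idx_col[of p n] oe_idx_row[of k n] pk(5), of "T * c" T] pk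
    by (simp add: ac_simps)
  finally show ?thesis .
qed

lemma EO1_word_conj:
  assumes c: "oe_idx n c d"
    and gen: "\<And>i j h. EO1_poly_gen n I (i, j, h) \<Longrightarrow>
      EO1_word n I T (oe n c d s * oe n i j (S * h) * oe n c d (- s))"
    and M: "EO1_word n I S M"
  shows "EO1_word n I T (oe n c d s * M * oe n c d (- s))"
proof -
  obtain hs where hs: "\<forall>g \<in> set hs. EO1_poly_gen n I g"
    and M_eq: "M = mat_list_prod n (map (\<lambda>(i, j, h). oe n i j (S * h)) hs)"
    using M unfolding EO1_word_def by blast
  from hs have "EO1_word n I T
    (oe n c d s * mat_list_prod n (map (\<lambda>(i, j, h). oe n i j (S * h)) hs) * oe n c d (- s))"
  proof (induction hs)
    case Nil
    then show ?case
      by (simp add: right_mult_one_mat[OF oe_carrier] oe_mult_inverse[OF c] EO1_word_one)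
  next
    case (Cons g hs)
    obtain i j h where g: "g = (i, j, h)" by (cases g)
    let ?R = "mat_list_prod n (map (\<lambda>(i, j, h). oe n i j (S * h)) hs)"
    have "?R \<in> carrier_mat (2*n) (2*n)" by (auto intro!: mat_list_prod_carrier)
    then have "oe n c d s * (oe n i j (S * h) * ?R) * oe n c d (- s) =
        (oe n c d s * oe n i j (S * h) * oe n c d (- s)) * (oe n c d s * ?R * oe n c d (- s))"
      using c by (simp add: oe_mult_assoc oe_cancel)
    with Cons g show ?case by (auto intro!: EO1_word_mult gen)
  qed
  with M_eq show ?thesis by simp
qed

section \<open>Conjugating words by a single generator\<close>

lemma EO1_word_conj_inner_row:
  assumes kl: "3 \<le> k" "k \<le> 2*n" "3 \<le> l" "l \<le> 2*n" "oe_idx n k l"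
    and q: "3 \<le> q" "q \<le> 2*n" "q \<noteq> sigma k" "q \<noteq> sigma l"
  shows "EO1_word n I T (oe n k l u * oe n 1 q (T * h) * oe n k l (- u))"
proof -
  consider "q = k" | "q = l" | "q \<notin> {k, l, sigma k, sigma l}"
    using q by blast
  then show ?thesis
  proof cases
    case 1
    have "oe n k l u * oe n 1 k (T * h) * oe n k l (- u)
      = oe n 1 k (T * h) * oe n 1 l (- (T * h * u))"
      using oe_conj_adjacent'[OF oe_idx_row[of k n] kl(5) oe_idx_row[of l n], of u "T * h"] kl
      by simp
    with 1 kl show ?thesis by (simp add: EO1_word_mult EO1_word_row del: One_nat_def)
  next
    case 2
    have "oe n k l u * oe n 1 l (T * h) * oe n k l (- u) = oe n 1 l (T * h)"
      using kl by (intro oe_conj_commuting oe_commute_same_col oe_idx_row) auto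
    with 2 kl show ?thesis by (simp add: EO1_word_row del: One_nat_def)
  next
    case 3
    have "{k, l, sigma k, sigma l} \<inter> {1, q, sigma 1, sigma q} = {}"
      using 3 kl q sigma_ge_3[of k] sigma_ge_3[of l] sigma_ge_3[of q]
        by (auto simp: sigma_sigma sigma_inj_iff)
    then have "oe n k l u * oe n 1 q (T * h) * oe n k l (- u) = oe n 1 q (T * h)"
      using kl q by (intro oe_conj_commuting oe_commute_disjoint oe_idx_row) auto
    with q show ?thesis by (simp add: EO1_word_row del: One_nat_def)
  qed
qed

lemma EO1_word_conj_inner_col:
  assumes I: "is_ideal I" and kl: "3 \<le> k" "k \<le> 2*n" "3 \<le> l" "l \<le> 2*n" "oe_idx n k l"
    and p: "3 \<le> p" "p \<le> 2*n" "p \<noteq> sigma k" "p \<noteq> sigma l" and h: "h \<in> poly_ideal2 I"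
  shows "EO1_word n I T (oe n k l u * oe n p 1 (T * h) * oe n k l (- u))"
proof -
  consider "p = l" | "p = k" | "p \<notin> {k, l, sigma k, sigma l}"
    using p by blast
  then show ?thesis
  proof cases
    case 1
    have "oe n k l u * oe n l 1 (T * h) * oe n k l (- u)
      = oe n l 1 (T * h) * oe n k 1 (T * (u * h))"
      using oe_conj_adjacent[OF kl(5) oe_idx_col[of l n] oe_idx_col[of k n], of u "T * h"] kl
      by (simp add: ac_simps)
    moreover have "EO1_word n I T (oe n l 1 (T * h) * oe n k 1 (T * (u * h)))"
      using kl h poly_ideal2_mult[OF I h] by (intro EO1_word_mult EO1_word_col) auto
    ultimately show ?thesis using 1 by simp
  next
    case 2
    have "oe n k l u * oe n k 1 (T * h) * oe n k l (- u) = oe n k 1 (T * h)"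
      using kl by (intro oe_conj_commuting oe_commute_same_row oe_idx_col) auto
    with 2 kl h show ?thesis by (simp add: EO1_word_col del: One_nat_def)
  next
    case 3
    have "{k, l, sigma k, sigma l} \<inter> {p, 1, sigma p, sigma 1} = {}"
      using 3 kl p sigma_ge_3[of k] sigma_ge_3[of l] sigma_ge_3[of p]
        by (auto simp: sigma_sigma sigma_inj_iff)
    then have "oe n k l u * oe n p 1 (T * h) * oe n k l (- u) = oe n p 1 (T * h)"
      using kl p by (intro oe_conj_commuting oe_commute_disjoint oe_idx_col) auto
    with p h show ?thesis by (simp add: EO1_word_col del: One_nat_def)
  qed
qed

lemma EO1_word_conj_inner:
  assumes I: "is_ideal I" and kl: "3 \<le> k" "k \<le> 2*n" "3 \<le> l" "l \<le> 2*n" "oe_idx n k l"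
    and M: "EO1_word n I T M"
  shows "EO1_word n I T (oe n k l u * M * oe n k l (- u))"
proof (rule EO1_word_conj[OF kl(5) _ M])
  \<comment> \<open>Generators meeting \<open>\<sigma> k\<close> or \<open>\<sigma> l\<close> are handled via \<open>oe\<^sub>k\<^sub>l(u) = oe\<^bsub>\<sigma> l \<sigma> k\<^esub>(-u)\<close>.\<close>
  fix i j h assume g: "EO1_poly_gen n I (i, j, h)"
  have swap: "oe n k l u = oe n (sigma l) (sigma k) (- u)"
    "oe n k l (- u) = oe n (sigma l) (sigma k) (- (- u))"
    using oe_sigma_transpose[OF kl(5), of "- u"] oe_sigma_transpose[OF kl(5), of u] by simp_all
  have kl': "3 \<le> sigma l" "sigma l \<le> 2*n" "3 \<le> sigma k" "sigma k \<le> 2*n"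
    "oe_idx n (sigma l) (sigma k)"
    using kl sigma_ge_3 oe_idxD(3,4)[OF kl(5)] oe_idx_sigma[OF kl(5)] by (auto simp: is_index_def)
  have inv: "sigma (sigma k) = k" "sigma (sigma l) = l"
    and apart: "sigma k \<notin> {k, l}" "sigma l \<notin> {k, l}"
    using oe_idxD[OF kl(5)] by auto
  from g show "EO1_word n I T (oe n k l u * oe n i j (T * h) * oe n k l (- u))"
  proof (cases rule: EO1_poly_genE)
    case 1
    show ?thesis
    proof (cases "j \<in> {sigma k, sigma l}")
      case True
      then show ?thesis
        using EO1_word_conj_inner_row[OF kl', of j I T "- u" h] 1 swap inv apart by auto
    next
      case False
      then show ?thesis using EO1_word_conj_inner_row[OF kl, of j I T u h] 1 by simp
    qed
  next
    case 2
    show ?thesis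
    proof (cases "i \<in> {sigma k, sigma l}")
      case True
      then show ?thesis
        using EO1_word_conj_inner_col[OF I kl', of i h T "- u"] 2 swap inv apart by auto
    next
      case False
      then show ?thesis using EO1_word_conj_inner_col[OF I kl, of i h T u] 2 by simp
    qed
  qed
qed

lemma EO1_word_conj_row_col:
  assumes I: "is_ideal I" and n: "3 \<le> n" and k: "3 \<le> k" "k \<le> 2*n" and h: "h \<in> poly_ideal2 I"
  shows "EO1_word n I T (oe n 1 k a * oe n k 1 (T ^ 4 * h) * oe n 1 k (- a))"
proof -
  obtain l where l: "3 \<le> l" "l \<le> 2*n" "oe_idx n k l" "oe_idx n l k"
    using exists_index_apart[OF n k] .
  have idx: "oe_idx n 1 k" "oe_idx n k 1" "oe_idx n 1 l" "oe_idx n l 1"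
    using oe_idx_row[OF k] oe_idx_col[OF k] oe_idx_row[OF l(1,2)] oe_idx_col[OF l(1,2)] by blast+
  have "oe n k 1 (T ^ 4 * h) = oe n k l (T * T) * oe n l 1 (T * (T * h)) * oe n k l (- (T * T))
      * oe n l 1 (- (T * (T * h)))"
    using oe_commutator[OF l(3) idx(4) idx(2), of "T * T" "T * (T * h)"]
    by (simp add: eval_nat_numeral ac_simps)
  then have "oe n 1 k a * oe n k 1 (T ^ 4 * h) * oe n 1 k (- a)
      = (oe n 1 k a * oe n k l (T * T) * oe n 1 k (- a))
      * (oe n 1 k a * oe n l 1 (T * (T * h)) * oe n 1 k (- a))
      * (oe n 1 k a * oe n k l (- (T * T)) * oe n 1 k (- a))
      * (oe n 1 k a * oe n l 1 (- (T * (T * h))) * oe n 1 k (- a))"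
    using idx by (simp add: oe_mult_assoc oe_cancel)
  also have "\<dots> = oe n k l (T * T)
      * (oe n 1 l (a * (T * T)) * oe n l 1 (T * (T * h)) * oe n l k (T * T * - (h * a)))
      * oe n k l (- (T * T))
      * (oe n 1 l (- (a * (T * T))) * oe n l 1 (T * - (T * h)) * oe n l k (T * T * (h * a)))"
    unfolding oe_conj_adjacent[OF idx(1) l(3) idx(3)] oe_conj_adjacent'[OF idx(4) idx(1) l(4)]
    by (simp add: oe_mult_assoc; simp add: algebra_simps)
  also have "EO1_word n I T \<dots>"
  proof (intro EO1_word_conj_inner[OF I k l(1,2) l(3)] EO1_word_mult)
    show "EO1_word n I T (oe n 1 l (a * (T * T)))"
      by (rule EO1_word_row) (use l in simp_all)
    show "EO1_word n I T (oe n 1 l (- (a * (T * T))))"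
      by (rule EO1_word_row) (use l in simp_all)
    show "EO1_word n I T (oe n l 1 (T * (T * h)))"
      by (rule EO1_word_col) (use l h in \<open>auto intro: poly_ideal2_mult I\<close>)
    show "EO1_word n I T (oe n l 1 (T * - (T * h)))"
      by (rule EO1_word_col) (use l h in \<open>auto intro!: poly_ideal2_mult poly_ideal2_uminus I\<close>)
    show "EO1_word n I T (oe n l k (T * T * - (h * a)))"
      by (rule EO1_word_inner)
        (use l k h in \<open>auto intro!: poly_ideal2_mult_right poly_ideal2_uminus I\<close>)
    show "EO1_word n I T (oe n l k (T * T * (h * a)))"
      by (rule EO1_word_inner) (use l k h in \<open>auto intro: poly_ideal2_mult_right I\<close>)
  qed
  finally show ?thesis .
qed

lemma EO1_word_conj_col_row:
  assumes I: "is_ideal I" and n: "3 \<le> n" and k: "3 \<le> k" "k \<le> 2*n" and x: "x \<in> poly_ideal2 I"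
  shows "EO1_word n I T (oe n k 1 x * oe n 1 k (T ^ 4 * h) * oe n k 1 (- x))"
proof -
  obtain l where l: "3 \<le> l" "l \<le> 2*n" "oe_idx n k l" "oe_idx n l k"
    using exists_index_apart[OF n k] .
  have idx: "oe_idx n 1 k" "oe_idx n k 1" "oe_idx n 1 l" "oe_idx n l 1"
    using oe_idx_row[OF k] oe_idx_col[OF k] oe_idx_row[OF l(1,2)] oe_idx_col[OF l(1,2)] by blast+
  have "oe n 1 k (T ^ 4 * h) = oe n 1 l (T * T) * oe n l k (T * (T * h)) * oe n 1 l (- (T * T))
      * oe n l k (- (T * (T * h)))"
    using oe_commutator[OF idx(3) l(4) idx(1), of "T * T" "T * (T * h)"]
    by (simp add: eval_nat_numeral ac_simps)
  then have "oe n k 1 x * oe n 1 k (T ^ 4 * h) * oe n k 1 (- x)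
      = (oe n k 1 x * oe n 1 l (T * T) * oe n k 1 (- x))
      * (oe n k 1 x * oe n l k (T * (T * h)) * oe n k 1 (- x))
      * (oe n k 1 x * oe n 1 l (- (T * T)) * oe n k 1 (- x))
      * (oe n k 1 x * oe n l k (- (T * (T * h))) * oe n k 1 (- x))"
    using idx by (simp add: oe_mult_assoc oe_cancel)
  also have "\<dots> = (oe n 1 l (T * T) * oe n k l (T * T * x))
      * (oe n l k (T * (T * h))
        * (oe n l 1 (T * - (T * h * x)) * oe n 1 l (- (T * T)) * oe n k l (T * T * - x))
        * oe n l k (- (T * (T * h))))
      * oe n l 1 (T * (T * h * x))"
    unfolding oe_conj_adjacent[OF idx(2) idx(3) l(3)] oe_conj_adjacent'[OF l(4) idx(2) idx(4)]
    by (simp add: oe_mult_assoc; simp add: algebra_simps)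
  also have "EO1_word n I T \<dots>"
  proof (intro EO1_word_conj_inner[OF I l(1,2) k l(4)] EO1_word_mult)
    show "EO1_word n I T (oe n 1 l (T * T))"
      by (rule EO1_word_row) (use l in simp_all)
    show "EO1_word n I T (oe n 1 l (- (T * T)))"
      by (rule EO1_word_row) (use l in simp_all)
    show "EO1_word n I T (oe n l 1 (T * - (T * h * x)))"
      by (rule EO1_word_col) (use l x in \<open>auto intro!: poly_ideal2_mult poly_ideal2_uminus I\<close>)
    show "EO1_word n I T (oe n l 1 (T * (T * h * x)))"
      by (rule EO1_word_col) (use l x in \<open>auto intro: poly_ideal2_mult I\<close>)
    show "EO1_word n I T (oe n k l (T * T * x))"
      by (rule EO1_word_inner) (use l k x I in auto)
    show "EO1_word n I T (oe n k l (T * T * - x))"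
      by (rule EO1_word_inner) (use l k x in \<open>auto intro: poly_ideal2_uminus I\<close>)
  qed
  finally show ?thesis .
qed

lemma EO1_word_conj_row_gen:
  assumes I: "is_ideal I" and n: "3 \<le> n"
    and c: "3 \<le> c" "c \<le> 2*n" and g: "EO1_poly_gen n I (i, j, h)"
  shows "EO1_word n I T (oe n 1 c a * oe n i j (T ^ 4 * h) * oe n 1 c (- a))"
  using g
proof (cases rule: EO1_poly_genE)
  case 1
  then have "oe n 1 c a * oe n 1 j (T ^ 4 * h) * oe n 1 c (- a) = oe n 1 j (T ^ 4 * h)"
    by (intro oe_conj_commuting oe_commute_same_row oe_idx_row c) auto
  with 1 show ?thesis by (simp add: EO1_word_row del: One_nat_def)
next
  case 2
  have T4: "T ^ 4 * h = T * (T ^ 3 * h)" by (simp add: eval_nat_numeral)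
  consider "i = sigma c" | "i = c" | "i \<noteq> c" "i \<noteq> sigma c" by blast
  then show ?thesis
  proof cases
    case 1
    have "oe n 1 c a * oe n (sigma c) 1 (T ^ 4 * h) * oe n 1 c (- a) = oe n (sigma c) 1 (T ^ 4 * h)"
      using c sigma_ge_3[of c] sigma_le[of c n]
      by (intro oe_conj_commuting oe_commute_sigma oe_idx_row oe_idx_col) auto
    then show ?thesis
      using 1 2 T4 by (simp add: EO1_word_col poly_ideal2_mult[OF I] del: One_nat_def)
  next
    case 2
    then show ?thesis using \<open>j = 1\<close> EO1_word_conj_row_col[OF I n c \<open>h \<in> poly_ideal2 I\<close>] by simp
  next
    case 3
    with 2 c have ic: "oe_idx n i c" by (intro oe_idx_inner)
    have "oe n 1 c a * oe n i 1 (T ^ 4 * h) * oe n 1 c (- a)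
        = oe n i 1 (T * (T ^ 3 * h)) * oe n i c (T * T * - (h * (T * T * a)))"
      using oe_conj_adjacent'[OF oe_idx_col[of i n] oe_idx_row[OF c] ic, of a] 2 c
      by (simp add: eval_nat_numeral ac_simps)
    also have "EO1_word n I T \<dots>"
    proof (rule EO1_word_mult)
      show "EO1_word n I T (oe n i 1 (T * (T ^ 3 * h)))"
        by (rule EO1_word_col) (use 2 in \<open>auto intro: poly_ideal2_mult I\<close>)
      show "EO1_word n I T (oe n i c (T * T * - (h * (T * T * a))))"
        by (rule EO1_word_inner)
          (use 2 c ic in \<open>auto intro!: poly_ideal2_uminus poly_ideal2_mult_right I\<close>)
    qed
    finally show ?thesis using 2 by simp
  qed
qed

lemma EO1_word_conj_col_gen:
  assumes I: "is_ideal I" and n: "3 \<le> n" and c: "3 \<le> c" "c \<le> 2*n" and x: "x \<in> poly_ideal2 I"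
    and g: "EO1_poly_gen n I (i, j, h)"
  shows "EO1_word n I T (oe n c 1 x * oe n i j (T ^ 4 * h) * oe n c 1 (- x))"
  using g
proof (cases rule: EO1_poly_genE)
  case 1
  consider "j = sigma c" | "j = c" | "j \<noteq> c" "j \<noteq> sigma c" by blast
  then show ?thesis
  proof cases
    case 1
    then have "oe_idx n (sigma j) 1"
      using c oe_idx_col[OF c] by (simp add: sigma_sigma)
    then have "oe n 1 j (T ^ 4 * h) * oe n c 1 x = oe n c 1 x * oe n 1 j (T ^ 4 * h)"
      using oe_commute_sigma[OF oe_idx_row[of j n]] 1 \<open>3 \<le> j\<close> \<open>j \<le> 2*n\<close> c
      by (simp add: sigma_sigma)
    then have "oe n c 1 x * oe n 1 j (T ^ 4 * h) * oe n c 1 (- x) = oe n 1 j (T ^ 4 * h)"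
      using c by (intro oe_conj_commuting oe_idx_col) auto
    then show ?thesis
      using \<open>i = 1\<close> \<open>3 \<le> j\<close> \<open>j \<le> 2*n\<close> by (simp add: EO1_word_row del: One_nat_def)
  next
    case 2
    then show ?thesis using \<open>i = 1\<close> EO1_word_conj_col_row[OF I n c x] by simp
  next
    case 3
    have "c \<noteq> sigma j"
      using \<open>j \<noteq> sigma c\<close> sigma_sigma[of j] \<open>3 \<le> j\<close> by force
    with 1 3 c have cj: "oe_idx n c j" by (intro oe_idx_inner) auto
    have "oe n c 1 x * oe n 1 j (T ^ 4 * h) * oe n c 1 (- x)
        = oe n 1 j (T ^ 4 * h) * oe n c j (T * T * (T * T * h * x))"
      using oe_conj_adjacent[OF oe_idx_col[OF c] oe_idx_row[of j n] cj, of x] 1 c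
      by (simp add: eval_nat_numeral ac_simps)
    also have "EO1_word n I T \<dots>"
    proof (rule EO1_word_mult)
      show "EO1_word n I T (oe n 1 j (T ^ 4 * h))"
        by (rule EO1_word_row) (use 1 in \<open>auto simp: eval_nat_numeral\<close>)
      show "EO1_word n I T (oe n c j (T * T * (T * T * h * x)))"
        by (rule EO1_word_inner) (use 1 c x cj in \<open>auto intro: poly_ideal2_mult I\<close>)
    qed
    finally show ?thesis using 1 by simp
  qed
next
  case 2
  then have "oe n c 1 x * oe n i 1 (T ^ 4 * h) * oe n c 1 (- x) = oe n i 1 (T ^ 4 * h)"
    by (intro oe_conj_commuting oe_commute_same_col oe_idx_col c) auto
  moreover have "T ^ 4 * h = T * (T ^ 3 * h)" by (simp add: eval_nat_numeral)
  ultimately show ?thesis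
    using 2 by (simp add: EO1_word_col poly_ideal2_mult[OF I] del: One_nat_def)
qed

lemma EO1_word_conj_EO1_gen:
  assumes I: "is_ideal I" and n: "3 \<le> n" and g: "EO1_gen n I (c, d, z)"
    and M: "EO1_word n I (T ^ 4) M"
  shows "EO1_word n I T (oe n c d (constXY z) * M * oe n c d (- constXY z))"
proof -
  from g consider "c = 1" "3 \<le> d" "d \<le> 2*n" | "d = 1" "3 \<le> c" "c \<le> 2*n" "z \<in> I"
    unfolding EO1_gen_def by auto
  then show ?thesis
  proof cases
    case 1
    then show ?thesis
      using EO1_word_conj[OF oe_idx_row[of d n] EO1_word_conj_row_gen[OF I n] M] by simp
  next
    case 2
    then show ?thesis
      using EO1_word_conj[OF oe_idx_col[of c n]
        EO1_word_conj_col_gen[OF I n _ _ constXY_in_poly_ideal2[OF I]] M]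
      by simp
  qed
qed

section \<open>Conjugation by a word of constant generators\<close>

lemma EO1_gen_oe_idx: "EO1_gen n I (c, d, z) \<Longrightarrow> oe_idx n c d"
  unfolding EO1_gen_def using oe_idx_row oe_idx_col by auto

definition const_word :: "nat \<Rightarrow> (nat \<times> nat \<times> 'a::comm_ring_1) list \<Rightarrow> 'a poly poly mat" where
  "const_word n gs = mat_list_prod n (map (\<lambda>(c, d, z). oe n c d (constXY z)) gs)"

definition const_word_inv :: "nat \<Rightarrow> (nat \<times> nat \<times> 'a::comm_ring_1) list \<Rightarrow> 'a poly poly mat" where
  "const_word_inv n gs = mat_list_prod n (rev (map (\<lambda>(c, d, z). oe n c d (- constXY z)) gs))"

lemma const_word_carrier: "const_word n gs \<in> carrier_mat (2*n) (2*n)"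
  unfolding const_word_def by (auto intro!: mat_list_prod_carrier)

lemma const_word_inv_carrier: "const_word_inv n gs \<in> carrier_mat (2*n) (2*n)"
  unfolding const_word_inv_def by (auto intro!: mat_list_prod_carrier)

lemma const_word_Cons: "const_word n ((c, d, z) # gs) = oe n c d (constXY z) * const_word n gs"
  unfolding const_word_def by simp

lemma const_word_inv_Cons:
  "const_word_inv n ((c, d, z) # gs) = const_word_inv n gs * oe n c d (- constXY z)"
  unfolding const_word_inv_def
  by (simp, subst mat_list_prod_append) (auto simp: right_mult_one_mat[OF oe_carrier])

lemma const_word_inv_mult:
  "\<forall>g \<in> set gs. EO1_gen n I g \<Longrightarrow> const_word_inv n gs * const_word n gs = 1\<^sub>m (2*n)"
proof (induction gs)
  case Nil
  then show ?case by (simp add: const_word_def const_word_inv_def)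
next
  case (Cons g gs)
  obtain c d z where g: "g = (c, d, z)" by (cases g)
  have cd: "oe_idx n c d" using Cons.prems g EO1_gen_oe_idx by auto
  have "const_word_inv n (g # gs) * const_word n (g # gs)
      = const_word_inv n gs * (oe n c d (- constXY z) * (oe n c d (constXY z) * const_word n gs))"
    unfolding g const_word_Cons const_word_inv_Cons
    using const_word_carrier[of n gs] const_word_inv_carrier[of n gs]
    by (simp add: assoc_mult_mat[of _ "2*n" "2*n" _ "2*n" _ "2*n"])
  also have "\<dots> = 1\<^sub>m (2*n)"
    using Cons by (simp add: oe_cancel[OF cd const_word_carrier])
  finally show ?case .
qed

lemma const_word_right_inverse:
  assumes "\<forall>g \<in> set gs. EO1_gen n I g" "E' \<in> carrier_mat (2*n) (2*n)" "const_word n gs * E' = 1\<^sub>m (2*n)"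
  shows "E' = const_word_inv n gs"
proof -
  have "E' = const_word_inv n gs * const_word n gs * E'"
    using const_word_inv_mult[OF assms(1)] assms(2) by simp
  also have "\<dots> = const_word_inv n gs * (const_word n gs * E')"
    using const_word_inv_carrier const_word_carrier assms(2) by (rule assoc_mult_mat)
  also have "\<dots> = const_word_inv n gs"
    using assms(3) const_word_inv_carrier[of n gs] by simp
  finally show ?thesis .
qed

lemma EO1_word_conj_const_word:
  assumes I: "is_ideal I" and n: "3 \<le> n" and gs: "\<forall>g \<in> set gs. EO1_gen n I g"
    and M: "EO1_word n I (T ^ 4 ^ length gs) M"
  shows "EO1_word n I T (const_word n gs * M * const_word_inv n gs)"
  using gs M
proof (induction gs arbitrary: T)
  case Nil
  then show ?case
    using EO1_word_carrier[OF Nil.prems(2)] by (simp add: const_word_def const_word_inv_def)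
next
  case (Cons g gs)
  obtain c d z where g: "g = (c, d, z)" by (cases g)
  have "EO1_word n I (T ^ 4) (const_word n gs * M * const_word_inv n gs)"
    using Cons by (simp add: power_mult[symmetric])
  then have "EO1_word n I T
      (oe n c d (constXY z) * (const_word n gs * M * const_word_inv n gs) * oe n c d (- constXY z))"
    using Cons.prems(1) g by (intro EO1_word_conj_EO1_gen[OF I n]) auto
  moreover have "const_word n (g # gs) * M * const_word_inv n (g # gs)
      = oe n c d (constXY z) * (const_word n gs * M * const_word_inv n gs) * oe n c d (- constXY z)"
    unfolding g const_word_Cons const_word_inv_Cons
    using const_word_carrier[of n gs] const_word_inv_carrier[of n gs]
      EO1_word_carrier[OF Cons.prems(2)]
    by (simp add: assoc_mult_mat[of _ "2*n" "2*n" _ "2*n" _ "2*n"])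
  ultimately show ?case by simp
qed

theorem mainTheorem5:
  fixes n :: nat and I :: "'a::comm_ring_1 set"
    and gs :: "(nat \<times> nat \<times> 'a) list"
    and i j :: nat and f :: "'a poly"
    and Einv :: "'a poly poly mat"
  assumes "n \<ge> 3"
    and "is_ideal I"
    and "\<forall>g\<in>set gs. EO1_gen n I g"
    and "(i = 1 \<and> 3 \<le> j \<and> j \<le> 2*n) \<or> (j = 1 \<and> 3 \<le> i \<and> i \<le> 2*n \<and> f \<in> poly_ideal1 I)"
    and "Einv \<in> carrier_mat (2*n) (2*n)"
    and "mat_list_prod n (map (\<lambda>(a, b, z). oe n a b (constXY z)) gs) * Einv = 1\<^sub>m (2*n)"
    and "Einv * mat_list_prod n (map (\<lambda>(a, b, z). oe n a b (constXY z)) gs) = 1\<^sub>m (2*n)"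
  shows "\<exists>hs :: (nat \<times> nat \<times> 'a poly poly) list.
           (\<forall>(it, jt, h) \<in> set hs. oe_idx n it jt \<and>
               ((it = 1) \<or> (jt = 1 \<and> h \<in> poly_ideal2 I))) \<and>
           mat_list_prod n (map (\<lambda>(a, b, z). oe n a b (constXY z)) gs)
             * oe n i j (varY ^ (4 ^ length gs) * varX * subst_XY f (varY ^ (4 ^ length gs) * varX))
             * Einv
           = mat_list_prod n (map (\<lambda>(it, jt, h). oe n it jt (varY * h)) hs)"
proof -
  let ?T = "varY ^ 4 ^ length gs" and ?E = "const_word n gs"
  define h where "h = varX * subst_XY f (?T * varX)"
  have Einv: "Einv = const_word_inv n gs"
    using assms(3,5,6) unfolding const_word_def[symmetric] by (rule const_word_right_inverse)
  have "EO1_poly_gen n I (i, j, h)"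
    using assms(4) oe_idx_row oe_idx_col
      poly_ideal2_mult[OF assms(2) subst_XY_in_poly_ideal2[OF assms(2)]]
    by (auto simp: EO1_poly_gen_def h_def)
  then have "EO1_word n I ?T (oe n i j (?T * h))"
    by (rule EO1_word_gen)
  then have "EO1_word n I varY (?E * oe n i j (?T * h) * Einv)"
    unfolding Einv by (rule EO1_word_conj_const_word[OF assms(2,1,3)])
  then obtain hs where "\<forall>g \<in> set hs. EO1_poly_gen n I g"
    and "?E * oe n i j (?T * h) * Einv = mat_list_prod n (map (\<lambda>(i, j, h). oe n i j (varY * h)) hs)"
    unfolding EO1_word_def by blast
  then show ?thesis
    unfolding const_word_def h_def EO1_poly_gen_def mult.assoc by auto
qed

end
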